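(* Let $\mathbf{A} = [\mathbf{A}^1 \dots \mathbf{A}^S] \in \mathbb{R}^{m\times n}$ with $\mathbf{A}^s \in \mathbb{R}^{m \times n^s}$ held at site $s\in\{1,\dots,S\}$, $n = \sum_s n^s$, and let $k \ge 1$ and $I \ge 1$ be integers. Let $\mathbf{G}_0^{\mathrm{init}} \in \mathbb{R}^{n\times k}$ be an initial matrix, and let $\mathbf{G}_0^{s,\mathrm{init}}$ denote its block of rows corresponding to site $s$. Let $\mathtt{orthonormalize}$ denote a fixed orthonormalization routine for $m\times k$ matrices and let $\mathrm{GS}$ denote (centralized) Gram-Schmidt orthonormalization of the columns of a matrix. Centralized vertical subspace iteration (with orthonormalization): $\mathbf{G}_0 = \mathrm{GS}(\mathbf{G}_0^{\mathrm{init}})$; for $i = 1,\dots,I$: $\mathbf{H}_i = \mathtt{orthonormalize}(\mathbf{A}\mathbf{G}_{i-1})$ and $\mathbf{G}_i = \mathrm{GS}(\mathbf{A}^\top \mathbf{H}_i)$. Federated vertical subspace iteration (with orthonormalization): the sites start with $\mathbf{G}_0^{s,\mathrm{init}}$ and orthonormalize them jointly via federated Gram-Schmidt, obtaining $\tilde{\mathbf{G}}_0^s$; for $i=1,\dots,I$: each site computes $\tilde{\mathbf{H}}_i^s = \mathbf{A}^s \tilde{\mathbf{G}}_{i-1}^s$, the aggregator computes $\tilde{\mathbf{H}}_i = \mathtt{orthonormalize}\big(\sum_{s=1}^S \tilde{\mathbf{H}}_i^s\big)$ and sends it to all sites, each site computes $(\mathbf{A}^s)^\top \tilde{\mathbf{H}}_i$,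 and these partial matrices are orthonormalized jointly via federated Gram-Schmidt to give $\tilde{\mathbf{G}}_i^s$. Here federated Gram-Schmidt applied to row blocks $\mathbf{V}^s$ (with columns $\mathbf{v}_i^s$) of a matrix $\mathbf{V}\in\mathbb{R}^{n\times k}$ is the procedure: sites set $\mathbf{u}_1^s=\mathbf{v}_1^s$, $n_1^s = (\mathbf{u}_1^s)^\top\mathbf{u}_1^s$, the aggregator forms $n_1=\sum_s n_1^s$; for $i=2,\dots,k$ sites compute $r_{ij}^s = (\mathbf{u}_j^s)^\top\mathbf{v}_i^s/n_j$ ($j<i$), the aggregator forms $r_{ij}=\sum_s r_{ij}^s$, sites compute $\mathbf{u}_i^s = \mathbf{v}_i^s - \sum_{j<i} r_{ij}\mathbf{u}_j^s$ and $n_i^s = (\mathbf{u}_i^s)^\top\mathbf{u}_i^s$, the aggregator forms $n_i = \sum_s n_i^s$; finally each site outputs $[\mathbf{u}_1^s/\sqrt{n_1}\dots\mathbf{u}_k^s/\sqrt{n_k}]$. Assume all Gram-Schmidt orthonormalizations above are well defined (the matrices being orthonormalized have linearly independent columns). Then centralized and federated vertical subspace iteration are equivalent: for every $i \in \{0,\dots,I\}$ and every site $s$, $\tilde{\mathbf{G}}_i^s$ equals the block of rows of $\mathbf{G}_i$ corresponding to site $s$, and for every $i\in\{1,\dots,I\}$, $\tilde{\mathbf{H}}_i = \mathbf{H}_i$.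
   Context: Setting: a star-shaped federated network with $S$ client sites and one aggregator; the columns of the data matrix $\mathbf{A}$ (samples) are vertically partitioned among the sites. "Same initialization" means both algorithms start from the same random initial matrix (same random seeds), the federated one with its row blocks distributed to the sites. The columns of $\mathbf{H}_i$ are candidate left singular vectors and those of $\mathbf{G}_i$ candidate right singular vectors of $\mathbf{A}$. *)

theory Defs
  imports "Jordan_Normal_Form.Matrix"
begin

text \<open>Sites are indexed 0..<S; site s holds ns s columns of A (samples).
  The offset of site s in the sample index range is the sum of the sizes of previous sites.\<close>

definition off :: "(nat \<Rightarrow> nat) \<Rightarrow> nat \<Rightarrow> nat" where
  "off ns s = (\<Sum>t<s. ns t)"

definition row_block :: "(nat \<Rightarrow> nat) \<Rightarrow> nat \<Rightarrow> real mat \<Rightarrow> real mat" where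
  "row_block ns s G = mat (ns s) (dim_col G) (\<lambda>(i,j). G $$ (off ns s + i, j))"

definition col_block :: "(nat \<Rightarrow> nat) \<Rightarrow> nat \<Rightarrow> real mat \<Rightarrow> real mat" where
  "col_block ns s A = mat (dim_row A) (ns s) (\<lambda>(i,j). A $$ (i, off ns s + j))"

definition lin_indep_cols :: "real mat \<Rightarrow> bool" where
  "lin_indep_cols M \<longleftrightarrow>
     (\<forall>c \<in> carrier_vec (dim_col M). M *\<^sub>v c = 0\<^sub>v (dim_row M) \<longrightarrow> c = 0\<^sub>v (dim_col M))"

fun gs_us :: "real mat \<Rightarrow> nat \<Rightarrow> real vec list" where
  "gs_us V 0 = []"
| "gs_us V (Suc i) =
    (let us = gs_us V i; v = col V i
     in us @ [vec (dim_row V) (\<lambda>q. v $ q - (\<Sum>j<i. ((us ! j \<bullet> v) / (us ! j \<bullet> us ! j)) * (us ! j) $ q))])"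

definition GS :: "real mat \<Rightarrow> real mat" where
  "GS V = (let us = gs_us V (dim_col V)
           in mat (dim_row V) (dim_col V) (\<lambda>(q,c). (us ! c) $ q / sqrt (us ! c \<bullet> us ! c)))"

definition fgs_norm :: "nat \<Rightarrow> (nat \<Rightarrow> real vec list) \<Rightarrow> nat \<Rightarrow> real" where
  "fgs_norm S U j = (\<Sum>s<S. U s ! j \<bullet> U s ! j)"

fun fgs_us :: "nat \<Rightarrow> (nat \<Rightarrow> real mat) \<Rightarrow> nat \<Rightarrow> nat \<Rightarrow> real vec list" where
  "fgs_us S Vs 0 = (\<lambda>s. [])"
| "fgs_us S Vs (Suc i) =
    (let U = fgs_us S Vs i;
         r = (\<lambda>j. \<Sum>s<S. (U s ! j \<bullet> col (Vs s) i) / fgs_norm S U j)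
     in (\<lambda>s. U s @ [vec (dim_row (Vs s))
                        (\<lambda>q. col (Vs s) i $ q - (\<Sum>j<i. r j * (U s ! j) $ q))]))"

definition fed_GS :: "nat \<Rightarrow> nat \<Rightarrow> (nat \<Rightarrow> real mat) \<Rightarrow> nat \<Rightarrow> real mat" where
  "fed_GS S k Vs s = (let U = fgs_us S Vs k
                      in mat (dim_row (Vs s)) k (\<lambda>(q,c). (U s ! c) $ q / sqrt (fgs_norm S U c)))"

definition sum_mats :: "nat \<Rightarrow> nat \<Rightarrow> nat \<Rightarrow> (nat \<Rightarrow> real mat) \<Rightarrow> real mat" where
  "sum_mats nr nc S F = mat nr nc (\<lambda>(r,c). \<Sum>s<S. F s $$ (r,c))"

primrec cG :: "real mat \<Rightarrow> (real mat \<Rightarrow> real mat) \<Rightarrow> real mat \<Rightarrow> nat \<Rightarrow> real mat" where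
  "cG A orth Ginit 0 = GS Ginit"
| "cG A orth Ginit (Suc i) = GS (transpose_mat A * orth (A * cG A orth Ginit i))"

definition cH :: "real mat \<Rightarrow> (real mat \<Rightarrow> real mat) \<Rightarrow> real mat \<Rightarrow> nat \<Rightarrow> real mat" where
  "cH A orth Ginit i = orth (A * cG A orth Ginit (i - 1))"  \<comment> \<open>meaningful for i \<ge> 1\<close>

primrec fG :: "real mat \<Rightarrow> (nat \<Rightarrow> nat) \<Rightarrow> nat \<Rightarrow> nat \<Rightarrow> (real mat \<Rightarrow> real mat) \<Rightarrow> real mat
               \<Rightarrow> nat \<Rightarrow> nat \<Rightarrow> real mat" where
  "fG A ns S k orth Ginit 0 = fed_GS S k (\<lambda>s. row_block ns s Ginit)"
| "fG A ns S k orth Ginit (Suc i) =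
     (let Ht = orth (sum_mats (dim_row A) k S (\<lambda>s. col_block ns s A * fG A ns S k orth Ginit i s))
      in fed_GS S k (\<lambda>s. transpose_mat (col_block ns s A) * Ht))"

definition fH :: "real mat \<Rightarrow> (nat \<Rightarrow> nat) \<Rightarrow> nat \<Rightarrow> nat \<Rightarrow> (real mat \<Rightarrow> real mat) \<Rightarrow> real mat
               \<Rightarrow> nat \<Rightarrow> real mat" where
  "fH A ns S k orth Ginit i =
     orth (sum_mats (dim_row A) k S (\<lambda>s. col_block ns s A * fG A ns S k orth Ginit (i - 1) s))"

end

theory Submission
  imports Defs
begin

text \<open>Every quantity the aggregator forms in federated Gram-Schmidt (norms n_j and coefficients
  r_ij) is a sum over sites of inner products of row blocks, and such a sum is the inner product of
  the full vectors. Hence by induction over the columns the site vectors u_i^s are exactly the row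
  blocks of the centralized Gram-Schmidt vectors u_i, and the federated output is the row block of
  GS. Likewise the aggregated sum of the products A^s G^s is the block product A G, and
  (A^s)^T H is the row block of A^T H, so an induction on the iteration count gives the theorem.
  The argument is purely algebraic: it holds whether or not the Gram-Schmidt steps divide by zero.\<close>

lemma sum_blocks:
  fixes f :: "nat \<Rightarrow> 'a::comm_monoid_add"
  shows "(\<Sum>s<S. \<Sum>q<ns s. f (off ns s + q)) = (\<Sum>p<(\<Sum>s<S. ns s). f p)"
proof (induction S)
  case 0
  then show ?case by simp
next
  case (Suc S)
  have "(\<Sum>p<(\<Sum>s<S. ns s) + ns S. f p)
      = (\<Sum>p<(\<Sum>s<S. ns s). f p) + (\<Sum>p=(\<Sum>s<S. ns s)..<(\<Sum>s<S. ns s) + ns S. f p)"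
    by (simp add: atLeast0LessThan[symmetric] sum.atLeastLessThan_concat)
  also have "(\<Sum>p=(\<Sum>s<S. ns s)..<(\<Sum>s<S. ns s) + ns S. f p) = (\<Sum>q<ns S. f (off ns S + q))"
    using sum.shift_bounds_nat_ivl[of f 0 "\<Sum>s<S. ns s" "ns S"]
    by (simp add: off_def atLeast0LessThan add.commute)
  finally show ?case
    using Suc by simp
qed

lemma off_add_le_sum: "s < S \<Longrightarrow> off ns s + ns s \<le> (\<Sum>t<S. ns t)"
  unfolding off_def using sum_mono2[of "{..<S}" "{..<Suc s}" ns] by simp

definition vec_block :: "(nat \<Rightarrow> nat) \<Rightarrow> nat \<Rightarrow> real vec \<Rightarrow> real vec" where
  "vec_block ns s v = vec (ns s) (\<lambda>q. v $ (off ns s + q))"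

lemma sum_scalar_prod_vec_block:
  assumes "dim_vec u = (\<Sum>t<S. ns t)" and "dim_vec v = (\<Sum>t<S. ns t)"
  shows "(\<Sum>s<S. vec_block ns s u \<bullet> vec_block ns s v) = u \<bullet> v"
  using sum_blocks[where S=S and ns=ns and f="\<lambda>p. u $ p * v $ p"] assms
  by (simp add: vec_block_def scalar_prod_def atLeast0LessThan)

lemma col_row_block:
  assumes "i < dim_col V" and "off ns s + ns s \<le> dim_row V"
  shows "col (row_block ns s V) i = vec_block ns s (col V i)"
  using assms by (intro eq_vecI) (auto simp: row_block_def vec_block_def)

lemma row_block_transpose_mult:
  assumes "A \<in> carrier_mat m n" and "H \<in> carrier_mat m k" and "off ns s + ns s \<le> n"
  shows "transpose_mat (col_block ns s A) * H = row_block ns s (transpose_mat A * H)"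
  using assms by (intro eq_matI) (auto simp: col_block_def row_block_def scalar_prod_def)

lemma sum_mats_col_block_mult_row_block:
  assumes A: "A \<in> carrier_mat m n" and G: "G \<in> carrier_mat n k" and n: "n = (\<Sum>t<S. ns t)"
  shows "sum_mats m k S (\<lambda>s. col_block ns s A * row_block ns s G) = A * G"
proof (rule eq_matI)
  fix r c
  assume rc: "r < dim_row (A * G)" "c < dim_col (A * G)"
  have "sum_mats m k S (\<lambda>s. col_block ns s A * row_block ns s G) $$ (r, c)
      = (\<Sum>s<S. \<Sum>q<ns s. A $$ (r, off ns s + q) * G $$ (off ns s + q, c))"
    using rc A G
    by (auto simp: sum_mats_def col_block_def row_block_def scalar_prod_def atLeast0LessThan
             intro!: sum.cong)
  also have "\<dots> = (\<Sum>p<n. A $$ (r, p) * G $$ (p, c))"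
    using sum_blocks[where S=S and ns=ns and f="\<lambda>p. A $$ (r, p) * G $$ (p, c)"] n by simp
  also have "\<dots> = (A * G) $$ (r, c)"
    using rc A G by (auto simp: scalar_prod_def atLeast0LessThan)
  finally show "sum_mats m k S (\<lambda>s. col_block ns s A * row_block ns s G) $$ (r, c) = (A * G) $$ (r, c)" .
qed (use A G in \<open>auto simp: sum_mats_def\<close>)

lemma sum_mats_cong:
  "(\<And>s. s < S \<Longrightarrow> F s = F' s) \<Longrightarrow> sum_mats nr nc S F = sum_mats nr nc S F'"
  unfolding sum_mats_def by simp

lemma length_gs_us [simp]: "length (gs_us V i) = i"
  by (induction i) (simp_all add: Let_def)

lemma dim_gs_us_nth: "j < i \<Longrightarrow> dim_vec (gs_us V i ! j) = dim_row V"
  by (induction i) (auto simp: Let_def nth_append less_Suc_eq)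

lemma GS_carrier: "GS V \<in> carrier_mat (dim_row V) (dim_col V)"
  by (simp add: GS_def Let_def)

lemma fgs_norm_vec_block:
  assumes "\<And>s. s < S \<Longrightarrow> U s = map (vec_block ns s) us"
    and "j < length us" and "dim_vec (us ! j) = (\<Sum>t<S. ns t)"
  shows "fgs_norm S U j = us ! j \<bullet> us ! j"
proof -
  have "fgs_norm S U j = (\<Sum>s<S. vec_block ns s (us ! j) \<bullet> vec_block ns s (us ! j))"
    unfolding fgs_norm_def using assms(1,2) by (intro sum.cong) auto
  also have "\<dots> = us ! j \<bullet> us ! j"
    using sum_scalar_prod_vec_block assms(3) by blast
  finally show ?thesis .
qed

lemma fgs_us_row_block:
  assumes V: "V \<in> carrier_mat n k" and n: "n = (\<Sum>t<S. ns t)"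
  shows "i \<le> k \<Longrightarrow> s < S \<Longrightarrow> fgs_us S (\<lambda>s. row_block ns s V) i s = map (vec_block ns s) (gs_us V i)"
proof (induction i arbitrary: s)
  case 0
  then show ?case by simp
next
  case (Suc i)
  define us where "us = gs_us V i"
  define v where "v = col V i"
  define U where "U = fgs_us S (\<lambda>s. row_block ns s V) i"
  have IH: "\<And>s. s < S \<Longrightarrow> U s = map (vec_block ns s) us"
    using Suc by (simp add: U_def us_def)
  have "i < k" "s < S"
    using Suc by simp_all
  have dim_us: "\<And>j. j < i \<Longrightarrow> dim_vec (us ! j) = n"
    using V by (simp add: us_def dim_gs_us_nth)
  have col_block_V: "col (row_block ns s V) i = vec_block ns s v" if "s < S" for s
    using \<open>i < k\<close> V off_add_le_sum[OF that, of ns] n by (simp add: col_row_block v_def)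
  have coeff: "(\<Sum>s<S. (U s ! j \<bullet> col (row_block ns s V) i) / fgs_norm S U j)
      = (us ! j \<bullet> v) / (us ! j \<bullet> us ! j)" if "j < i" for j
  proof -
    have "fgs_norm S U j = us ! j \<bullet> us ! j"
      using fgs_norm_vec_block[OF IH] that dim_us n by (simp add: us_def)
    then have "(\<Sum>s<S. (U s ! j \<bullet> col (row_block ns s V) i) / fgs_norm S U j)
        = (\<Sum>s<S. vec_block ns s (us ! j) \<bullet> vec_block ns s v) / (us ! j \<bullet> us ! j)"
      unfolding sum_divide_distrib using IH that col_block_V by (auto simp: us_def)
    also have "\<dots> = (us ! j \<bullet> v) / (us ! j \<bullet> us ! j)"
      using sum_scalar_prod_vec_block dim_us that V n by (simp add: v_def)
    finally show ?thesis .
  qed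
  have "fgs_us S (\<lambda>s. row_block ns s V) (Suc i) s
      = U s @ [vec (dim_row (row_block ns s V)) (\<lambda>q. col (row_block ns s V) i $ q
                 - (\<Sum>j<i. (\<Sum>s<S. (U s ! j \<bullet> col (row_block ns s V) i) / fgs_norm S U j) * (U s ! j) $ q))]"
    by (simp only: fgs_us.simps Let_def U_def)
  also have "\<dots> = U s @ [vec (ns s) (\<lambda>q. vec_block ns s v $ q
                 - (\<Sum>j<i. ((us ! j \<bullet> v) / (us ! j \<bullet> us ! j)) * (U s ! j) $ q))]"
    using coeff col_block_V[OF \<open>s < S\<close>] by (simp add: row_block_def[of ns s V])
  also have "\<dots> = map (vec_block ns s) (gs_us V (Suc i))"
    using IH[OF \<open>s < S\<close>] off_add_le_sum[OF \<open>s < S\<close>, of ns] n V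
    by (auto simp: Let_def vec_block_def us_def v_def intro!: sum.cong)
  finally show ?case .
qed

lemma fed_GS_row_block:
  assumes V: "V \<in> carrier_mat n k" and n: "n = (\<Sum>t<S. ns t)" and s: "s < S"
  shows "fed_GS S k (\<lambda>s. row_block ns s V) s = row_block ns s (GS V)"
proof -
  define us where "us = gs_us V k"
  define U where "U = fgs_us S (\<lambda>s. row_block ns s V) k"
  have U: "\<And>s. s < S \<Longrightarrow> U s = map (vec_block ns s) us"
    using fgs_us_row_block[OF V n] by (simp add: U_def us_def)
  have norm: "fgs_norm S U j = us ! j \<bullet> us ! j" if "j < k" for j
    using fgs_norm_vec_block[OF U] that V n by (simp add: us_def dim_gs_us_nth)
  show ?thesis
    unfolding fed_GS_def GS_def Let_def U_def[symmetric] us_def[symmetric]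
    using V U[OF s] norm off_add_le_sum[OF s, of ns] n
    by (intro eq_matI) (auto simp: row_block_def vec_block_def us_def)
qed

lemma fgs_us_cong:
  assumes "\<And>s. s < S \<Longrightarrow> Vs s = Vs' s"
  shows "\<forall>s<S. fgs_us S Vs i s = fgs_us S Vs' i s"
proof (induction i)
  case 0
  then show ?case by simp
next
  case (Suc i)
  have norm: "fgs_norm S (fgs_us S Vs i) j = fgs_norm S (fgs_us S Vs' i) j" for j
    unfolding fgs_norm_def using Suc by simp
  have coeff: "(\<Sum>s<S. (fgs_us S Vs i s ! j \<bullet> col (Vs s) i) / fgs_norm S (fgs_us S Vs i) j)
      = (\<Sum>s<S. (fgs_us S Vs' i s ! j \<bullet> col (Vs' s) i) / fgs_norm S (fgs_us S Vs' i) j)" for j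
    unfolding norm using Suc assms by simp
  show ?case
    by (simp only: fgs_us.simps Let_def coeff) (use Suc assms in auto)
qed

lemma fed_GS_cong:
  assumes "\<And>s. s < S \<Longrightarrow> Vs s = Vs' s" and "s < S"
  shows "fed_GS S k Vs s = fed_GS S k Vs' s"
proof -
  have U: "\<forall>s<S. fgs_us S Vs k s = fgs_us S Vs' k s"
    using fgs_us_cong assms(1) by blast
  have "fgs_norm S (fgs_us S Vs k) j = fgs_norm S (fgs_us S Vs' k) j" for j
    unfolding fgs_norm_def using U by simp
  then show ?thesis
    unfolding fed_GS_def Let_def using U assms by simp
qed

context
  fixes A Ginit :: "real mat" and ns :: "nat \<Rightarrow> nat" and S m n k :: nat
    and orth :: "real mat \<Rightarrow> real mat"
  assumes A: "A \<in> carrier_mat m n"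
    and n: "n = (\<Sum>s<S. ns s)"
    and Ginit: "Ginit \<in> carrier_mat n k"
    and orth: "\<forall>M \<in> carrier_mat m k. orth M \<in> carrier_mat m k"
begin

lemma cG_carrier: "cG A orth Ginit i \<in> carrier_mat n k"
proof (induction i)
  case 0
  show ?case using GS_carrier[of Ginit] Ginit by simp
next
  case (Suc i)
  then have "orth (A * cG A orth Ginit i) \<in> carrier_mat m k"
    using orth A by simp
  then show ?case
    using GS_carrier[of "transpose_mat A * orth (A * cG A orth Ginit i)"] A by simp
qed

lemma sum_mats_col_block_mult_fG:
  assumes "\<forall>s<S. fG A ns S k orth Ginit i s = row_block ns s (cG A orth Ginit i)"
  shows "sum_mats (dim_row A) k S (\<lambda>s. col_block ns s A * fG A ns S k orth Ginit i s)
       = A * cG A orth Ginit i"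
  using assms sum_mats_cong sum_mats_col_block_mult_row_block[OF A cG_carrier n] A
  by (metis (no_types, lifting) carrier_matD(1))

lemma fG_eq_row_block_cG: "s < S \<Longrightarrow> fG A ns S k orth Ginit i s = row_block ns s (cG A orth Ginit i)"
proof (induction i arbitrary: s)
  case 0
  then show ?case using fed_GS_row_block[OF Ginit n] by simp
next
  case (Suc i)
  define H where "H = orth (A * cG A orth Ginit i)"
  have H: "H \<in> carrier_mat m k"
    using orth A cG_carrier by (simp add: H_def)
  have "fG A ns S k orth Ginit (Suc i) s = fed_GS S k (\<lambda>s. transpose_mat (col_block ns s A) * H) s"
    using sum_mats_col_block_mult_fG Suc.IH by (simp add: Let_def H_def)
  also have "\<dots> = fed_GS S k (\<lambda>s. row_block ns s (transpose_mat A * H)) s"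
    using row_block_transpose_mult[OF A H] off_add_le_sum n Suc.prems by (intro fed_GS_cong) auto
  also have "\<dots> = row_block ns s (cG A orth Ginit (Suc i))"
    using fed_GS_row_block[where V="transpose_mat A * H" and S=S and ns=ns] A H n Suc.prems by (simp add: H_def)
  finally show ?case .
qed

lemma fH_eq_cH: "fH A ns S k orth Ginit i = cH A orth Ginit i"
  unfolding fH_def cH_def using sum_mats_col_block_mult_fG fG_eq_row_block_cG by simp

end

theorem mainTheorem2:
  fixes A Ginit :: "real mat" and ns :: "nat \<Rightarrow> nat" and S m n k I :: nat
    and orth :: "real mat \<Rightarrow> real mat"
  assumes "A \<in> carrier_mat m n"
    and "n = (\<Sum>s<S. ns s)"
    and "k \<ge> 1" and "I \<ge> 1"
    and "Ginit \<in> carrier_mat n k"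
    and "\<forall>M \<in> carrier_mat m k. orth M \<in> carrier_mat m k"
    and "lin_indep_cols Ginit"
    and "\<forall>i \<in> {1..I}. lin_indep_cols (transpose_mat A * cH A orth Ginit i)"
  shows "(\<forall>i \<le> I. \<forall>s < S. fG A ns S k orth Ginit i s = row_block ns s (cG A orth Ginit i))
       \<and> (\<forall>i \<in> {1..I}. fH A ns S k orth Ginit i = cH A orth Ginit i)"
  using fG_eq_row_block_cG[OF assms(1,2,5,6)] fH_eq_cH[OF assms(1,2,5,6)] by blast

end
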